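(* (a) $\lim_{\sigma\to0}\sup\{\gamma(\omega_{\sigma,y}):y\in\mathbb{R}^3\}=0$; (b) for every $r>0$, $\lim_{\sigma\to\infty}\inf\{\gamma(\omega_{\sigma,y}):y\in\mathbb{R}^3,\ |y|\le r\}=1$; (c) $(\beta(\omega_{\sigma,y})\,|\,y)_{\mathbb{R}^3}>0$ for all $y\in\mathbb{R}^3\setminus\{0\}$ and all $\sigma>0$.
   Context: $(\cdot|\cdot)_{\mathbb{R}^3}$ is the Euclidean scalar product. For $u\in L^6(\mathbb{R}^3)\setminus\{0\}$: $\beta(u)=\frac1{|u|_6^6}\int_{\mathbb{R}^3}\frac{x}{1+|x|}u^6dx$, $\gamma(u)=\frac1{|u|_6^6}\int_{\mathbb{R}^3}\left|\frac{x}{1+|x|}-\beta(u)\right|u^6dx$. $\omega\in C_0^\infty(B_1(0))$, $\omega\not\equiv0$, $\omega\ge0$, $\omega$ radial with $|x_1|\le|x_2|\Rightarrow\omega(x_1)\ge\omega(x_2)$ (in the paper $\omega$ additionally lies on the Nehari manifold of $\frac12\int|\nabla u|^2-\frac16\int u^6$ with energy in a prescribed interval $(\frac13S^{3/2},\bar c)$). For $\sigma>0$, $y\in\mathbb{R}^3$: $\omega_{\sigma,y}(x)=\sigma^{-1/2}\omega((x-y)/\sigma)$ for $x\in B_\sigma(y)$, $0$ otherwise. *)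

theory Defs
  imports "HOL-Analysis.Analysis"
begin

text \<open>C-infinity functions R^3 -> R: differentiable everywhere, and every first
  partial derivative is again C-infinity (greatest fixed point).\<close>
coinductive smooth3 :: "(real^3 \<Rightarrow> real) \<Rightarrow> bool" where
  "(\<forall>x. f differentiable (at x)) \<Longrightarrow>
   (\<forall>v\<in>(Basis :: (real^3) set). smooth3 (\<lambda>x. frechet_derivative f (at x) v)) \<Longrightarrow>
   smooth3 f"

definition L6pow6 :: "(real^3 \<Rightarrow> real) \<Rightarrow> real" where
  "L6pow6 u = (\<integral>x. \<bar>u x\<bar> ^ 6 \<partial>lborel)"

definition beta :: "(real^3 \<Rightarrow> real) \<Rightarrow> real^3" where
  "beta u = (1 / L6pow6 u) *\<^sub>R (\<integral>x. (u x ^ 6) *\<^sub>R ((1 / (1 + norm x)) *\<^sub>R x) \<partial>lborel)"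

definition gamma :: "(real^3 \<Rightarrow> real) \<Rightarrow> real" where
  "gamma u = (1 / L6pow6 u) *
     (\<integral>x. norm ((1 / (1 + norm x)) *\<^sub>R x - beta u) * u x ^ 6 \<partial>lborel)"

definition omega_sy :: "(real^3 \<Rightarrow> real) \<Rightarrow> real \<Rightarrow> real^3 \<Rightarrow> real^3 \<Rightarrow> real" where
  "omega_sy \<omega> \<sigma> y x =
     (if x \<in> ball y \<sigma> then \<sigma> powr (-1/2) * \<omega> ((1/\<sigma>) *\<^sub>R (x - y)) else 0)"

end

theory Submission
  imports Defs "HOL-Real_Asymp.Real_Asymp"
begin

text \<open>
  With \<open>h(x) = x / (1 + |x|)\<close>, the substitution \<open>x = y + \<sigma> z\<close> turns \<open>\<beta>\<close> into the
  \<open>\<omega>\<^sup>6\<close>-weighted mean of \<open>h(y + \<sigma> z)\<close> over the unit ball, and \<open>\<gamma>\<close> into the weighted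
  mean distance of \<open>h(y + \<sigma> z)\<close> from \<open>\<beta>\<close>. Since \<open>h\<close> is 2-Lipschitz, \<open>h(y + \<sigma> z)\<close>
  varies by at most \<open>4\<sigma>\<close> over the ball, so \<open>\<gamma> \<le> 4\<sigma>\<close>. As \<open>\<sigma> \<rightarrow> \<infinity>\<close>, the
  weighted mean of \<open>1 / (1 + \<sigma>|z|)\<close> tends to 0 by dominated convergence; since
  \<open>h(\<sigma> z)\<close> is odd in \<open>z\<close> with norm \<open>1 - 1 / (1 + \<sigma>|z|)\<close>, this gives \<open>\<beta> \<rightarrow> 0\<close>
  and \<open>|h(y + \<sigma> z)| \<rightarrow> 1\<close> in mean, uniformly for \<open>|y| \<le> r\<close>, hence \<open>\<gamma> \<rightarrow> 1\<close>.
  Finally, pairing \<open>z\<close> with \<open>-z\<close> and using \<open>(h(y + z) + h(y - z)) \<cdot> y \<ge> 0\<close> gives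
  \<open>\<beta> \<cdot> y > 0\<close>.
\<close>

definition shrink :: "'a::real_normed_vector \<Rightarrow> 'a" where
  "shrink x = (1 / (1 + norm x)) *\<^sub>R x"

lemma norm_shrink: "norm (shrink x) = 1 - 1 / (1 + norm x)"
proof -
  have "1 + norm x > 0" by (simp add: add_pos_nonneg)
  then show ?thesis by (simp add: shrink_def field_simps)
qed

lemma norm_shrink_le_1: "norm (shrink x) \<le> 1"
  by (simp add: norm_shrink add_pos_nonneg)

lemma shrink_minus: "shrink (- x) = - shrink x"
  by (simp add: shrink_def)

lemma continuous_on_shrink [continuous_intros]:
  "continuous_on S f \<Longrightarrow> continuous_on S (\<lambda>x. shrink (f x))"
  unfolding shrink_def
  by (intro continuous_intros) (auto simp: add_nonneg_eq_0_iff)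

lemma norm_shrink_diff_le_div: "norm (shrink a - shrink b) \<le> 2 * norm (a - b) / (1 + norm a)"
proof -
  define p q where "p = 1 + norm a" and "q = 1 + norm b"
  have p: "p \<ge> 1" and q: "q \<ge> 1" by (auto simp: p_def q_def)
  have "shrink a - shrink b = (1 / p) *\<^sub>R (a - b) + (1 / p - 1 / q) *\<^sub>R b"
    by (simp add: shrink_def p_def q_def algebra_simps)
  then have "norm (shrink a - shrink b) \<le> norm (a - b) / p + \<bar>1 / p - 1 / q\<bar> * norm b"
    using p norm_triangle_ineq[of "(1 / p) *\<^sub>R (a - b)" "(1 / p - 1 / q) *\<^sub>R b"] by simp
  also have "\<bar>1 / p - 1 / q\<bar> * norm b = \<bar>q - p\<bar> / p * (norm b / q)"
    using p q by (simp add: field_simps abs_divide)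
  also have "\<dots> \<le> norm (a - b) / p * 1"
  proof (rule mult_mono)
    have "\<bar>q - p\<bar> \<le> norm (a - b)"
      using norm_triangle_ineq3[of a b] by (simp add: p_def q_def abs_minus_commute)
    then show "\<bar>q - p\<bar> / p \<le> norm (a - b) / p"
      using p by (simp add: divide_right_mono)
  qed (use p in \<open>auto simp: q_def divide_le_eq add_pos_nonneg\<close>)
  finally show ?thesis by (simp add: p_def)
qed

lemma norm_shrink_diff_le: "norm (shrink a - shrink b) \<le> 2 * norm (a - b)"
proof -
  have "2 * norm (a - b) / (1 + norm a) \<le> 2 * norm (a - b) / 1"
    by (intro divide_left_mono) (auto simp: add_pos_nonneg)
  then show ?thesis
    using norm_shrink_diff_le_div[of a b] by simp
qed

lemma continuous_on_inverse_1_plus_scaled_norm [continuous_intros]: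
  "c \<ge> 0 \<Longrightarrow> continuous_on S f \<Longrightarrow> continuous_on S (\<lambda>z. 1 / (1 + c * norm (f z)))"
  by (intro continuous_intros) (auto simp: add_nonneg_eq_0_iff)

lemma inner_shrink_self_pos:
  fixes y :: "'a::real_inner"
  shows "y \<noteq> 0 \<Longrightarrow> shrink y \<bullet> y > 0"
  by (simp add: shrink_def add_pos_nonneg)

lemma inner_shrink_add_shrink_diff_nonneg:
  fixes y z :: "'a::real_inner"
  shows "(shrink (y + z) + shrink (y - z)) \<bullet> y \<ge> 0"
proof -
  define a b c t where "a = norm (y + z)" and "b = norm (y - z)" and "c = y \<bullet> y" and "t = z \<bullet> y"
  have a: "a \<ge> 0" and b: "b \<ge> 0" by (simp_all add: a_def b_def)
  have "a\<^sup>2 - b\<^sup>2 = 4 * t"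
    by (simp add: a_def b_def t_def power2_norm_eq_inner algebra_simps inner_commute)
  have "\<bar>a - b\<bar> \<le> \<bar>2 * norm y\<bar>"
    using norm_triangle_ineq3[of "y + z" "z - y"]
    by (simp add: a_def b_def norm_minus_commute algebra_simps flip: scaleR_2)
  then have "(a - b)\<^sup>2 \<le> (2 * norm y)\<^sup>2"
    by (simp only: abs_le_square_iff)
  then have "(a - b)\<^sup>2 \<le> 4 * c"
    by (simp add: c_def power_mult_distrib power2_norm_eq_inner)
  then have "(a - b)\<^sup>2 * (a + b) \<le> (4 * c) * (a + b)"
    using a b by (intro mult_right_mono) auto
  moreover have "(a - b)\<^sup>2 * (a + b) = (a - b) * (a\<^sup>2 - b\<^sup>2)"
    by (simp add: power2_eq_square algebra_simps)
  ultimately have "4 * (t * (a - b)) \<le> 4 * (c * (a + b))"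
    using \<open>a\<^sup>2 - b\<^sup>2 = 4 * t\<close> by (simp add: algebra_simps)
  moreover have "(c + t) * (1 + b) + (c - t) * (1 + a) = 2 * c + (c * (a + b) - t * (a - b))"
    by (simp add: algebra_simps)
  ultimately have "0 \<le> (c + t) * (1 + b) + (c - t) * (1 + a)"
    using inner_ge_zero[of y] unfolding c_def by linarith
  moreover have "(shrink (y + z) + shrink (y - z)) \<bullet> y = (c + t) / (1 + a) + (c - t) / (1 + b)"
    by (simp add: shrink_def a_def b_def c_def t_def inner_add_left inner_diff_left
        inner_commute[of z y] add_divide_distrib diff_divide_distrib)
  moreover have "\<dots> = ((c + t) * (1 + b) + (c - t) * (1 + a)) / ((1 + a) * (1 + b))"
    using a b by (simp add: field_simps)
  ultimately show ?thesis using a b by simp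
qed

lemma lborel_integral_affine:
  fixes f :: "'a::euclidean_space \<Rightarrow> 'b::{banach, second_countable_topology}"
  assumes f: "integrable lborel f" and c: "c \<noteq> 0"
  shows "(\<integral>x. f x \<partial>lborel) = \<bar>c\<bar> ^ DIM('a) *\<^sub>R (\<integral>x. f (t + c *\<^sub>R x) \<partial>lborel)"
proof -
  have [measurable]: "f \<in> borel_measurable borel" using f by auto
  have lborel_eq: "lborel = density (distr lborel borel (\<lambda>x. t + c *\<^sub>R x)) (\<lambda>_. \<bar>c\<bar> ^ DIM('a))"
    using lborel_affine[OF c, of t] by simp
  have "integrable (density (distr lborel borel (\<lambda>x. t + c *\<^sub>R x)) (\<lambda>_. \<bar>c\<bar> ^ DIM('a))) f"
    using f lborel_eq by simp
  then have "integrable lborel (\<lambda>x. \<bar>c\<bar> ^ DIM('a) *\<^sub>R f (t + c *\<^sub>R x))"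
    by (subst (asm) integrable_density, simp_all, subst (asm) integrable_distr_eq) auto
  from integrable_scaleR_right[OF this, of "1 / \<bar>c\<bar> ^ DIM('a)"]
  have integrable: "integrable lborel (\<lambda>x. f (t + c *\<^sub>R x))"
    using c by simp
  show ?thesis
    by (subst lborel_eq) (use integrable in \<open>simp add: integral_density integral_distr\<close>)
qed

lemma lborel_integral_reflect:
  fixes f :: "'a::euclidean_space \<Rightarrow> 'b::{banach, second_countable_topology}"
  assumes "integrable lborel f"
  shows "(\<integral>x. f (- x) \<partial>lborel) = (\<integral>x. f x \<partial>lborel)"
  using lborel_integral_affine[OF assms, of "-1" 0] by simp

lemma lborel_integral_pos_continuous:
  fixes f :: "'a::euclidean_space \<Rightarrow> real"
  assumes "continuous_on UNIV f" and "integrable lborel f"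
    and "\<And>x. f x \<ge> 0" and "f a > 0"
  shows "(\<integral>x. f x \<partial>lborel) > 0"
proof -
  obtain d where "d > 0" and d: "\<And>x. dist x a < d \<Longrightarrow> dist (f x) (f a) < f a / 2"
    using assms(1,4) unfolding continuous_on_iff by (metis UNIV_I half_gt_zero)
  have below: "indicator (ball a d) x * (f a / 2) \<le> f x" for x
    using d[of x] assms(3)[of x]
    by (auto simp: indicator_def dist_commute dist_real_def abs_if split: if_splits)
  have "0 < measure lborel (ball a d) * (f a / 2)"
    using content_ball_pos[OF \<open>d > 0\<close>, of a] assms(4) by simp
  also have "\<dots> = (\<integral>x. indicator (ball a d) x * (f a / 2) \<partial>lborel)"
    by simp
  also have "\<dots> \<le> (\<integral>x. f x \<partial>lborel)"
    by (rule integral_mono[OF _ assms(2) below])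
      (intro integrable_mult_left integrable_real_indicator emeasure_lborel_ball_finite; simp)
  finally show ?thesis .
qed

locale even_bump =
  fixes \<omega> :: "real^3 \<Rightarrow> real"
  assumes continuous: "continuous_on UNIV \<omega>"
    and support: "\<And>x. \<omega> x \<noteq> 0 \<Longrightarrow> norm x < 1"
    and nonneg: "\<And>x. \<omega> x \<ge> 0"
    and even: "\<And>x. \<omega> (- x) = \<omega> x"
    and pos_0: "\<omega> 0 > 0"
begin

definition mass :: real where
  "mass = (\<integral>z. \<omega> z ^ 6 \<partial>lborel)"

definition wmean :: "(real^3 \<Rightarrow> 'b::{banach, second_countable_topology}) \<Rightarrow> 'b" where
  "wmean f = (1 / mass) *\<^sub>R (\<integral>z. \<omega> z ^ 6 *\<^sub>R f z \<partial>lborel)"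

lemma borel_measurable_omega [measurable]: "\<omega> \<in> borel_measurable borel"
  by (rule borel_measurable_continuous_onI[OF continuous])

lemma integrable_weighted:
  fixes f :: "real^3 \<Rightarrow> 'b::{banach, second_countable_topology}"
  assumes "continuous_on UNIV f"
  shows "integrable lborel (\<lambda>z. \<omega> z ^ 6 *\<^sub>R f z)"
proof -
  have "(\<lambda>z. \<omega> z ^ 6 *\<^sub>R f z) = (\<lambda>z. indicator (cball 0 1) z *\<^sub>R (\<omega> z ^ 6 *\<^sub>R f z))"
    using support by (force simp: indicator_def)
  then show ?thesis
    by (simp only:) (rule borel_integrable_compact;
        auto intro!: continuous_intros continuous_on_subset[OF continuous] continuous_on_subset[OF assms])
qed

lemma mass_pos: "mass > 0"
  unfolding mass_def
  using integrable_weighted[of "\<lambda>_. 1::real"] pos_0 nonneg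
  by (intro lborel_integral_pos_continuous[where a = 0]) (auto intro!: continuous_intros continuous)

lemma wmean_const: "wmean (\<lambda>_. c) = c"
  using integrable_weighted[of "\<lambda>_. 1::real"] mass_pos by (simp add: wmean_def mass_def)

lemma wmean_add:
  "continuous_on UNIV f \<Longrightarrow> continuous_on UNIV g \<Longrightarrow> wmean (\<lambda>z. f z + g z) = wmean f + wmean g"
  by (simp add: wmean_def integrable_weighted scaleR_add_right)

lemma wmean_diff:
  "continuous_on UNIV f \<Longrightarrow> continuous_on UNIV g \<Longrightarrow> wmean (\<lambda>z. f z - g z) = wmean f - wmean g"
  by (simp add: wmean_def integrable_weighted scaleR_diff_right)

lemma wmean_real: "wmean f = (\<integral>z. \<omega> z ^ 6 * f z \<partial>lborel) / mass"
  for f :: "real^3 \<Rightarrow> real"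
  by (simp add: wmean_def)

lemma wmean_mult_left: "wmean (\<lambda>z. c * f z) = c * wmean f"
  for f :: "real^3 \<Rightarrow> real"
  by (simp add: wmean_real mult.left_commute)

lemma inner_wmean_left:
  fixes f :: "real^3 \<Rightarrow> real^3"
  assumes "continuous_on UNIV f"
  shows "wmean f \<bullet> v = wmean (\<lambda>z. f z \<bullet> v)"
  using integral_inner_left[of v lborel "\<lambda>z. \<omega> z ^ 6 *\<^sub>R f z"] integrable_weighted[OF assms]
  by (simp add: wmean_def)

lemma norm_wmean_le: "norm (wmean f) \<le> wmean (\<lambda>z. norm (f z))"
  using integral_norm_bound[of lborel "\<lambda>z. \<omega> z ^ 6 *\<^sub>R f z"] mass_pos nonneg
  by (simp add: wmean_def divide_right_mono)

lemma wmean_mono: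
  fixes f g :: "real^3 \<Rightarrow> real"
  assumes "continuous_on UNIV f" "continuous_on UNIV g"
    and "\<And>z. norm z < 1 \<Longrightarrow> f z \<le> g z"
  shows "wmean f \<le> wmean g"
proof -
  have "\<omega> z ^ 6 * f z \<le> \<omega> z ^ 6 * g z" for z
    using support[of z] assms(3)[of z] nonneg[of z] by (cases "\<omega> z = 0") (auto intro: mult_left_mono)
  then have "(\<integral>z. \<omega> z ^ 6 * f z \<partial>lborel) \<le> (\<integral>z. \<omega> z ^ 6 * g z \<partial>lborel)"
    using integrable_weighted[OF assms(1)] integrable_weighted[OF assms(2)]
    by (intro integral_mono) auto
  then show ?thesis
    using mass_pos by (simp add: wmean_real divide_right_mono)
qed

lemma wmean_pos:
  fixes f :: "real^3 \<Rightarrow> real"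
  assumes "continuous_on UNIV f" "\<And>z. f z \<ge> 0" "f 0 > 0"
  shows "wmean f > 0"
proof -
  have "(\<integral>z. \<omega> z ^ 6 * f z \<partial>lborel) > 0"
    using integrable_weighted[OF assms(1)] assms pos_0 nonneg
    by (intro lborel_integral_pos_continuous[where a = 0]) (auto intro!: continuous_intros continuous)
  then show ?thesis
    using mass_pos by (simp add: wmean_real)
qed

lemma wmean_reflect:
  "continuous_on UNIV f \<Longrightarrow> wmean (\<lambda>z. f (- z)) = wmean f"
  using lborel_integral_reflect[OF integrable_weighted, of f] by (simp add: wmean_def even)

lemma omega_sy_pow6:
  assumes "\<sigma> > 0"
  shows "omega_sy \<omega> \<sigma> y x ^ 6 = \<omega> ((1 / \<sigma>) *\<^sub>R (x - y)) ^ 6 / \<sigma> ^ 3"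
proof (cases "x \<in> ball y \<sigma>")
  case True
  have "(\<sigma> powr (-1/2)) ^ 6 = \<sigma> powr (-3)"
    using assms by (subst powr_power) auto
  also have "\<dots> = 1 / \<sigma> ^ 3"
    using assms by (simp add: powr_minus powr_realpow divide_inverse)
  finally have "(\<sigma> powr (-1/2)) ^ 6 = 1 / \<sigma> ^ 3" .
  then show ?thesis
    using True by (simp add: omega_sy_def power_mult_distrib)
next
  case False
  then have "norm ((1 / \<sigma>) *\<^sub>R (x - y)) \<ge> 1"
    using assms by (simp add: dist_norm norm_minus_commute)
  then have "\<omega> ((1 / \<sigma>) *\<^sub>R (x - y)) = 0"
    using support by force
  then show ?thesis
    using False by (simp add: omega_sy_def)
qed

lemma integral_omega_sy_pow6:
  fixes g :: "real^3 \<Rightarrow> 'b::{banach, second_countable_topology}"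
  assumes "\<sigma> > 0" and "continuous_on UNIV g"
  shows "(\<integral>x. omega_sy \<omega> \<sigma> y x ^ 6 *\<^sub>R g x \<partial>lborel) = mass *\<^sub>R wmean (\<lambda>z. g (y + \<sigma> *\<^sub>R z))"
proof -
  define k where "k z = \<omega> z ^ 6 *\<^sub>R g (y + \<sigma> *\<^sub>R z)" for z
  have "integrable lborel k"
    unfolding k_def
    by (intro integrable_weighted continuous_on_compose2[OF assms(2)] continuous_intros) auto
  then have "(\<integral>z. k z \<partial>lborel)
      = \<bar>1 / \<sigma>\<bar> ^ 3 *\<^sub>R (\<integral>x. k (- (1 / \<sigma>) *\<^sub>R y + (1 / \<sigma>) *\<^sub>R x) \<partial>lborel)"
    using assms(1) lborel_integral_affine[of k "1 / \<sigma>" "- (1 / \<sigma>) *\<^sub>R y"] by simp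
  also have "\<dots> = (\<integral>x. omega_sy \<omega> \<sigma> y x ^ 6 *\<^sub>R g x \<partial>lborel)"
  proof -
    have "omega_sy \<omega> \<sigma> y x ^ 6 *\<^sub>R g x = \<bar>1 / \<sigma>\<bar> ^ 3 *\<^sub>R k (- (1 / \<sigma>) *\<^sub>R y + (1 / \<sigma>) *\<^sub>R x)"
      for x
    proof -
      have "y + \<sigma> *\<^sub>R (- (1 / \<sigma>) *\<^sub>R y + (1 / \<sigma>) *\<^sub>R x) = x"
        and "- (1 / \<sigma>) *\<^sub>R y + (1 / \<sigma>) *\<^sub>R x = (1 / \<sigma>) *\<^sub>R (x - y)"
        using assms(1) by (simp_all add: algebra_simps)
      then show ?thesis
        using assms(1) by (simp add: k_def omega_sy_pow6 power_divide)
    qed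
    then show ?thesis by simp
  qed
  finally show ?thesis
    using mass_pos by (simp add: wmean_def k_def)
qed

lemma L6pow6_omega_sy: "\<sigma> > 0 \<Longrightarrow> L6pow6 (omega_sy \<omega> \<sigma> y) = mass"
  using integral_omega_sy_pow6[of \<sigma> "\<lambda>_. 1::real" y]
  by (simp add: L6pow6_def power_even_abs_numeral wmean_const)

lemma beta_omega_sy:
  "\<sigma> > 0 \<Longrightarrow> beta (omega_sy \<omega> \<sigma> y) = wmean (\<lambda>z. shrink (y + \<sigma> *\<^sub>R z))"
  using integral_omega_sy_pow6[of \<sigma> shrink y] mass_pos
  by (simp add: beta_def L6pow6_omega_sy continuous_on_shrink[OF continuous_on_id] flip: shrink_def)

lemma gamma_omega_sy:
  "\<sigma> > 0 \<Longrightarrow> gamma (omega_sy \<omega> \<sigma> y)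
     = wmean (\<lambda>z. norm (shrink (y + \<sigma> *\<^sub>R z) - beta (omega_sy \<omega> \<sigma> y)))"
  using integral_omega_sy_pow6[of \<sigma> "\<lambda>x. norm (shrink x - beta (omega_sy \<omega> \<sigma> y))" y] mass_pos
  by (simp add: gamma_def L6pow6_omega_sy mult.commute continuous_intros flip: shrink_def)

lemma inner_beta_omega_sy_pos:
  assumes "\<sigma> > 0" and "y \<noteq> 0"
  shows "beta (omega_sy \<omega> \<sigma> y) \<bullet> y > 0"
proof -
  define H where "H z = shrink (y + \<sigma> *\<^sub>R z) \<bullet> y" for z
  have H: "continuous_on UNIV H"
    unfolding H_def by (intro continuous_intros)
  have "beta (omega_sy \<omega> \<sigma> y) \<bullet> y = wmean H"
    using assms(1) by (simp add: beta_omega_sy inner_wmean_left continuous_intros H_def [abs_def])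
  then have "2 * (beta (omega_sy \<omega> \<sigma> y) \<bullet> y) = wmean H + wmean (\<lambda>z. H (- z))"
    using wmean_reflect[OF H] by simp
  also have "\<dots> = wmean (\<lambda>z. H z + H (- z))"
    using H by (intro wmean_add [symmetric] continuous_on_compose2[OF H] continuous_intros) auto
  also have "\<dots> = wmean (\<lambda>z. (shrink (y + \<sigma> *\<^sub>R z) + shrink (y - \<sigma> *\<^sub>R z)) \<bullet> y)"
    by (simp add: H_def inner_add_left)
  also have "\<dots> > 0"
  proof (rule wmean_pos)
    show "0 < (shrink (y + \<sigma> *\<^sub>R 0) + shrink (y - \<sigma> *\<^sub>R 0)) \<bullet> y"
      unfolding inner_add_left using inner_shrink_self_pos[OF assms(2)] by simp
  qed (auto intro!: continuous_intros inner_shrink_add_shrink_diff_nonneg)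
  finally show ?thesis by simp
qed

lemma gamma_omega_sy_le:
  assumes "\<sigma> > 0"
  shows "gamma (omega_sy \<omega> \<sigma> y) \<le> 4 * \<sigma>"
proof -
  define H where "H z = shrink (y + \<sigma> *\<^sub>R z)" for z
  define b where "b = beta (omega_sy \<omega> \<sigma> y)"
  have H: "continuous_on UNIV H"
    unfolding H_def by (intro continuous_intros)
  have close: "norm (H z - H z') \<le> 4 * \<sigma>" if "norm z < 1" "norm z' < 1" for z z'
  proof -
    have "norm (H z - H z') \<le> 2 * norm (\<sigma> *\<^sub>R (z - z'))"
      using norm_shrink_diff_le[of "y + \<sigma> *\<^sub>R z" "y + \<sigma> *\<^sub>R z'"] by (simp add: H_def algebra_simps)
    also have "\<dots> \<le> 2 * (\<sigma> * 2)"
      using assms norm_triangle_ineq4[of z z'] that by simp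
    finally show ?thesis by simp
  qed
  have "norm (H z - b) \<le> 4 * \<sigma>" if "norm z < 1" for z
  proof -
    have "H z - b = wmean (\<lambda>z'. H z - H z')"
      using assms H by (simp add: b_def beta_omega_sy wmean_diff wmean_const H_def)
    then have "norm (H z - b) \<le> wmean (\<lambda>z'. norm (H z - H z'))"
      using norm_wmean_le by simp
    also have "\<dots> \<le> wmean (\<lambda>_. 4 * \<sigma>)"
      using H close[OF that] by (intro wmean_mono continuous_intros) auto
    finally show ?thesis by (simp add: wmean_const)
  qed
  then have "wmean (\<lambda>z. norm (H z - b)) \<le> wmean (\<lambda>_. 4 * \<sigma>)"
    using H by (intro wmean_mono continuous_intros) auto
  then show ?thesis
    using assms by (simp add: gamma_omega_sy wmean_const H_def b_def)
qed

lemma gamma_omega_sy_nonneg: "\<sigma> > 0 \<Longrightarrow> gamma (omega_sy \<omega> \<sigma> y) \<ge> 0"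
  using wmean_mono[of "\<lambda>_. 0" "\<lambda>z. norm (shrink (y + \<sigma> *\<^sub>R z) - beta (omega_sy \<omega> \<sigma> y))"]
  by (simp add: gamma_omega_sy wmean_const continuous_intros)

definition decay :: "real \<Rightarrow> real" where
  "decay \<sigma> = wmean (\<lambda>z. 1 / (1 + \<sigma> * norm z))"

lemma decay_nonneg: "\<sigma> \<ge> 0 \<Longrightarrow> decay \<sigma> \<ge> 0"
  using wmean_mono[of "\<lambda>_. 0" "\<lambda>z. 1 / (1 + \<sigma> * norm z)"]
  by (simp add: decay_def wmean_const continuous_intros)

lemma decay_tendsto_0: "(decay \<longlongrightarrow> 0) at_top"
proof -
  define s where "s \<sigma> z = \<omega> z ^ 6 * (1 / (1 + \<sigma> * norm z))" for \<sigma> and z :: "real^3"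
  have "((\<lambda>\<sigma>. \<integral>z. s \<sigma> z \<partial>lborel) \<longlongrightarrow> (\<integral>z. 0 \<partial>(lborel :: (real^3) measure))) at_top"
  proof (rule integral_dominated_convergence_at_top[where w = "\<lambda>z. \<omega> z ^ 6"])
    show "integrable lborel (\<lambda>z. \<omega> z ^ 6)"
      using integrable_weighted[of "\<lambda>_. 1::real"] by simp
    show "AE z in lborel. ((\<lambda>\<sigma>. s \<sigma> z) \<longlongrightarrow> 0) at_top"
      using AE_lborel_singleton[of 0]
    proof eventually_elim
      case (elim z)
      then have "norm z > 0" by simp
      then show ?case unfolding s_def by real_asymp
    qed
    show "\<forall>\<^sub>F \<sigma> in at_top. AE z in lborel. norm (s \<sigma> z) \<le> \<omega> z ^ 6"
      using eventually_ge_at_top[of "0::real"]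
      by eventually_elim (auto intro!: AE_I2 simp: s_def divide_le_eq add_pos_nonneg mult_le_cancel_left1)
  qed (simp_all add: s_def)
  then have "((\<lambda>\<sigma>. (\<integral>z. s \<sigma> z \<partial>lborel) / mass) \<longlongrightarrow> 0) at_top"
    by (simp add: tendsto_divide_zero)
  then show ?thesis
    unfolding decay_def wmean_real s_def by simp
qed

lemma wmean_shrink_dilation: "wmean (\<lambda>z. shrink (\<sigma> *\<^sub>R z)) = 0"
proof -
  have "wmean (\<lambda>z. shrink (\<sigma> *\<^sub>R z)) = wmean (\<lambda>z. shrink (\<sigma> *\<^sub>R - z))"
    by (intro wmean_reflect [symmetric] continuous_intros)
  also have "\<dots> = - wmean (\<lambda>z. shrink (\<sigma> *\<^sub>R z))"
    by (simp add: wmean_def shrink_minus)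
  finally have "2 *\<^sub>R wmean (\<lambda>z. shrink (\<sigma> *\<^sub>R z)) = 0"
    by (simp add: scaleR_2 eq_neg_iff_add_eq_0)
  then show ?thesis by simp
qed

lemma norm_beta_omega_sy_le:
  assumes "\<sigma> > 0"
  shows "norm (beta (omega_sy \<omega> \<sigma> y)) \<le> 2 * norm y * decay \<sigma>"
proof -
  define H where "H z = shrink (y + \<sigma> *\<^sub>R z) - shrink (\<sigma> *\<^sub>R z)" for z
  have "wmean H = wmean (\<lambda>z. shrink (y + \<sigma> *\<^sub>R z)) - wmean (\<lambda>z. shrink (\<sigma> *\<^sub>R z))"
    unfolding H_def by (intro wmean_diff continuous_intros)
  then have "beta (omega_sy \<omega> \<sigma> y) = wmean H"
    using assms by (simp add: beta_omega_sy wmean_shrink_dilation)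
  then have "norm (beta (omega_sy \<omega> \<sigma> y)) \<le> wmean (\<lambda>z. norm (H z))"
    using norm_wmean_le by simp
  also have "\<dots> \<le> wmean (\<lambda>z. 2 * norm y * (1 / (1 + \<sigma> * norm z)))"
  proof (rule wmean_mono)
    show "norm (H z) \<le> 2 * norm y * (1 / (1 + \<sigma> * norm z))" for z
      using norm_shrink_diff_le_div[of "\<sigma> *\<^sub>R z" "y + \<sigma> *\<^sub>R z"] assms
      by (simp add: H_def norm_minus_commute)
  qed (use assms in \<open>auto simp: H_def add_nonneg_eq_0_iff zero_le_mult_iff intro!: continuous_intros\<close>)
  finally show ?thesis
    by (simp only: wmean_mult_left decay_def)
qed

lemma gamma_omega_sy_le_1_plus_norm_beta:
  assumes "\<sigma> > 0"
  shows "gamma (omega_sy \<omega> \<sigma> y) \<le> 1 + norm (beta (omega_sy \<omega> \<sigma> y))"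
proof -
  define b where "b = beta (omega_sy \<omega> \<sigma> y)"
  have "norm (shrink (y + \<sigma> *\<^sub>R z) - b) \<le> 1 + norm b" for z
    using norm_triangle_ineq4[of "shrink (y + \<sigma> *\<^sub>R z)" b] norm_shrink_le_1[of "y + \<sigma> *\<^sub>R z"]
    by simp
  then have "wmean (\<lambda>z. norm (shrink (y + \<sigma> *\<^sub>R z) - b)) \<le> wmean (\<lambda>_. 1 + norm b)"
    by (intro wmean_mono continuous_intros) auto
  then show ?thesis
    using assms by (simp add: gamma_omega_sy wmean_const b_def)
qed

lemma gamma_omega_sy_ge:
  assumes "\<sigma> > 0"
  shows "gamma (omega_sy \<omega> \<sigma> y)
    \<ge> 1 - norm (beta (omega_sy \<omega> \<sigma> y)) - (1 + 2 * norm y) * decay \<sigma>"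
proof -
  define b where "b = beta (omega_sy \<omega> \<sigma> y)"
  define q where "q z = 1 / (1 + \<sigma> * norm z)" for z :: "real^3"
  have q: "continuous_on UNIV q"
    unfolding q_def using assms by (intro continuous_intros) simp
  have "1 - norm b - (1 + 2 * norm y) * q z \<le> norm (shrink (y + \<sigma> *\<^sub>R z) - b)" for z
  proof -
    have "norm (shrink (\<sigma> *\<^sub>R z) - shrink (y + \<sigma> *\<^sub>R z)) \<le> 2 * norm y * q z"
      using norm_shrink_diff_le_div[of "\<sigma> *\<^sub>R z" "y + \<sigma> *\<^sub>R z"] assms by (simp add: q_def)
    moreover have "norm (shrink (\<sigma> *\<^sub>R z)) = 1 - q z"
      using assms by (simp add: norm_shrink q_def)
    ultimately show ?thesis
      using norm_triangle_sub[of "shrink (\<sigma> *\<^sub>R z)" "shrink (y + \<sigma> *\<^sub>R z)"]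
        norm_triangle_ineq2[of "shrink (y + \<sigma> *\<^sub>R z)" b]
      by (simp add: algebra_simps)
  qed
  then have "wmean (\<lambda>z. (1 - norm b) - (1 + 2 * norm y) * q z)
      \<le> wmean (\<lambda>z. norm (shrink (y + \<sigma> *\<^sub>R z) - b))"
    using q by (intro wmean_mono continuous_intros) auto
  then show ?thesis
    using assms q
    by (simp add: gamma_omega_sy wmean_diff wmean_const wmean_mult_left continuous_intros
        decay_def b_def flip: q_def)
qed

lemma gamma_omega_sy_bounds:
  assumes "\<sigma> > 0" and "norm y \<le> r"
  shows "1 - (1 + 4 * r) * decay \<sigma> \<le> gamma (omega_sy \<omega> \<sigma> y)"
    and "gamma (omega_sy \<omega> \<sigma> y) \<le> 1 + 2 * r * decay \<sigma>"
proof -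
  have "decay \<sigma> \<ge> 0" using assms(1) by (simp add: decay_nonneg)
  then have "2 * norm y * decay \<sigma> \<le> 2 * r * decay \<sigma>"
    and "(1 + 2 * norm y) * decay \<sigma> \<le> (1 + 2 * r) * decay \<sigma>"
    using assms(2) by (simp_all add: mult_right_mono)
  then have "norm (beta (omega_sy \<omega> \<sigma> y)) \<le> 2 * r * decay \<sigma>"
    and "(1 + 2 * norm y) * decay \<sigma> \<le> (1 + 2 * r) * decay \<sigma>"
    using norm_beta_omega_sy_le[OF assms(1), of y] by simp_all
  then show "1 - (1 + 4 * r) * decay \<sigma> \<le> gamma (omega_sy \<omega> \<sigma> y)"
    and "gamma (omega_sy \<omega> \<sigma> y) \<le> 1 + 2 * r * decay \<sigma>"
    using gamma_omega_sy_ge[OF assms(1), of y] gamma_omega_sy_le_1_plus_norm_beta[OF assms(1), of y]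
    by (simp_all add: algebra_simps)
qed

lemma SUP_gamma_omega_sy_tendsto_0:
  "((\<lambda>\<sigma>. SUP y. gamma (omega_sy \<omega> \<sigma> y)) \<longlongrightarrow> 0) (at_right 0)"
proof (rule tendsto_sandwich[where f = "\<lambda>_. 0" and h = "\<lambda>\<sigma>. 4 * \<sigma>"])
  have bounds: "0 \<le> (SUP y. gamma (omega_sy \<omega> \<sigma> y)) \<and> (SUP y. gamma (omega_sy \<omega> \<sigma> y)) \<le> 4 * \<sigma>"
    if "\<sigma> > 0" for \<sigma>
  proof
    have "bdd_above (range (\<lambda>y. gamma (omega_sy \<omega> \<sigma> y)))"
      using gamma_omega_sy_le[OF that] by (intro bdd_aboveI2)
    then have "gamma (omega_sy \<omega> \<sigma> 0) \<le> (SUP y. gamma (omega_sy \<omega> \<sigma> y))"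
      by (rule cSUP_upper[OF UNIV_I])
    then show "0 \<le> (SUP y. gamma (omega_sy \<omega> \<sigma> y))"
      using gamma_omega_sy_nonneg[OF that, of 0] by linarith
    show "(SUP y. gamma (omega_sy \<omega> \<sigma> y)) \<le> 4 * \<sigma>"
      using gamma_omega_sy_le[OF that] by (intro cSUP_least) auto
  qed
  show "\<forall>\<^sub>F \<sigma> in at_right 0. 0 \<le> (SUP y. gamma (omega_sy \<omega> \<sigma> y))"
    and "\<forall>\<^sub>F \<sigma> in at_right 0. (SUP y. gamma (omega_sy \<omega> \<sigma> y)) \<le> 4 * \<sigma>"
    using bounds by (simp_all add: eventually_mono[OF eventually_at_right_less])
  have "((\<lambda>\<sigma>::real. 4 * \<sigma>) \<longlongrightarrow> 4 * 0) (at_right 0)"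
    by (intro tendsto_intros)
  then show "((\<lambda>\<sigma>::real. 4 * \<sigma>) \<longlongrightarrow> 0) (at_right 0)"
    by simp
qed simp

lemma INF_gamma_omega_sy_tendsto_1:
  assumes "r > 0"
  shows "((\<lambda>\<sigma>. INF y\<in>cball 0 r. gamma (omega_sy \<omega> \<sigma> y)) \<longlongrightarrow> 1) at_top"
proof (rule tendsto_sandwich[where f = "\<lambda>\<sigma>. 1 - (1 + 4 * r) * decay \<sigma>"
      and h = "\<lambda>\<sigma>. 1 + 2 * r * decay \<sigma>"])
  have "1 - (1 + 4 * r) * decay \<sigma> \<le> (INF y\<in>cball 0 r. gamma (omega_sy \<omega> \<sigma> y))
      \<and> (INF y\<in>cball 0 r. gamma (omega_sy \<omega> \<sigma> y)) \<le> 1 + 2 * r * decay \<sigma>"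
    if "\<sigma> > 0" for \<sigma>
  proof
    show "1 - (1 + 4 * r) * decay \<sigma> \<le> (INF y\<in>cball 0 r. gamma (omega_sy \<omega> \<sigma> y))"
      using gamma_omega_sy_bounds(1)[OF that] assms by (intro cINF_greatest) auto
    have "bdd_below ((\<lambda>y. gamma (omega_sy \<omega> \<sigma> y)) ` cball 0 r)"
      using gamma_omega_sy_bounds(1)[OF that] by (intro bdd_belowI2) auto
    then have "(INF y\<in>cball 0 r. gamma (omega_sy \<omega> \<sigma> y)) \<le> gamma (omega_sy \<omega> \<sigma> 0)"
      using assms by (intro cINF_lower) auto
    also have "\<dots> \<le> 1 + 2 * r * decay \<sigma>"
      using gamma_omega_sy_bounds(2)[OF that, of 0 r] assms by simp
    finally show "(INF y\<in>cball 0 r. gamma (omega_sy \<omega> \<sigma> y)) \<le> 1 + 2 * r * decay \<sigma>" .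
  qed
  then show "\<forall>\<^sub>F \<sigma> in at_top. 1 - (1 + 4 * r) * decay \<sigma> \<le> (INF y\<in>cball 0 r. gamma (omega_sy \<omega> \<sigma> y))"
    and "\<forall>\<^sub>F \<sigma> in at_top. (INF y\<in>cball 0 r. gamma (omega_sy \<omega> \<sigma> y)) \<le> 1 + 2 * r * decay \<sigma>"
    by (auto intro: eventually_mono[OF eventually_gt_at_top[of 0]])
  show "((\<lambda>\<sigma>. 1 - (1 + 4 * r) * decay \<sigma>) \<longlongrightarrow> 1) at_top"
    and "((\<lambda>\<sigma>. 1 + 2 * r * decay \<sigma>) \<longlongrightarrow> 1) at_top"
    by (auto intro!: tendsto_eq_intros decay_tendsto_0)
qed

end

lemma even_bumpI:
  fixes \<omega> :: "real^3 \<Rightarrow> real"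
  assumes "smooth3 \<omega>"
    and "closure {x. \<omega> x \<noteq> 0} \<subseteq> ball 0 1"
    and "\<exists>x. \<omega> x \<noteq> 0"
    and "\<And>x. \<omega> x \<ge> 0"
    and "\<And>x1 x2. norm x1 = norm x2 \<Longrightarrow> \<omega> x1 = \<omega> x2"
    and "\<And>x1 x2. norm x1 \<le> norm x2 \<Longrightarrow> \<omega> x1 \<ge> \<omega> x2"
  shows "even_bump \<omega>"
proof
  show "continuous_on UNIV \<omega>"
    using assms(1) by (cases rule: smooth3.cases)
      (auto intro!: continuous_at_imp_continuous_on differentiable_imp_continuous_within)
  show "norm x < 1" if "\<omega> x \<noteq> 0" for x
    using assms(2) closure_subset[of "{x. \<omega> x \<noteq> 0}"] that by auto
  obtain x0 where "\<omega> x0 \<noteq> 0" using assms(3) by blast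
  then show "\<omega> 0 > 0"
    using assms(4)[of x0] assms(6)[of 0 x0] by simp
  show "\<omega> x \<ge> 0" for x
    by (rule assms(4))
  show "\<omega> (- x) = \<omega> x" for x
    by (rule assms(5)) simp
qed

theorem lemma3p8:
  fixes \<omega> :: "real^3 \<Rightarrow> real"
  assumes smooth: "smooth3 \<omega>"
    and supp: "compact (closure {x. \<omega> x \<noteq> 0})" "closure {x. \<omega> x \<noteq> 0} \<subseteq> ball 0 1"
    and nonzero: "\<exists>x. \<omega> x \<noteq> 0"
    and nonneg: "\<And>x. \<omega> x \<ge> 0"
    and radial: "\<And>x1 x2. norm x1 = norm x2 \<Longrightarrow> \<omega> x1 = \<omega> x2"
    and mono: "\<And>x1 x2. norm x1 \<le> norm x2 \<Longrightarrow> \<omega> x1 \<ge> \<omega> x2"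
  shows "((\<lambda>\<sigma>. SUP y. gamma (omega_sy \<omega> \<sigma> y)) \<longlongrightarrow> 0) (at_right 0)
     \<and> (\<forall>r>0. ((\<lambda>\<sigma>. INF y\<in>cball 0 r. gamma (omega_sy \<omega> \<sigma> y)) \<longlongrightarrow> 1) at_top)
     \<and> (\<forall>y \<sigma>. y \<noteq> 0 \<longrightarrow> \<sigma> > 0 \<longrightarrow> beta (omega_sy \<omega> \<sigma> y) \<bullet> y > 0)"
proof -
  have "even_bump \<omega>"
    using smooth supp(2) nonzero nonneg radial mono by (rule even_bumpI)
  then show ?thesis
    by (simp add: even_bump.SUP_gamma_omega_sy_tendsto_0 even_bump.INF_gamma_omega_sy_tendsto_1
        even_bump.inner_beta_omega_sy_pos)
qed

end
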